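(* Assume $\sigma_1(x)=\sigma_1'(0)x$ with $\sigma_1'(0)\ne0$ and $(1-q^{-1})\tau(0)=-\sigma_1'(0)$, so that $\sigma_2(x)=\tfrac12\sigma_2''(0)x^2$ with $\tfrac12\sigma_2''(0)=q(1-q^{-1})\tau'(0)$ (thus the zero $a_2$ of $\sigma_2$ is $a_2=0$, and $y_0:=q^{-1}\Big[1+\frac{(1-q^{-1})\tau(0)}{\sigma_1'(0)}\Big]$ satisfies $qy_0=0$). Assume $\Lambda_q:=\tau'(0)/\sigma_1'(0)<0$. Let $$\rho(x)=|x|^{\alpha}\sqrt{x^{\log_qx-1}},\qquad q^{\alpha}=\frac{q^{-2}\tfrac12\sigma_2''(0)}{\sigma_1'(0)}.$$ Then there exist polynomials $P_n$, $n\in\mathbb{N}_0$, with $P_n$ of degree $n$ a solution of the q-EHT with $\lambda=\lambda_n$, and nonzero constants $d_n^2$, such that for all $m,n\in\mathbb{N}_0$ $$\int_0^{\infty}P_n(x)P_m(x)\rho(x)\,d_qx=d_n^2\delta_{mn},$$ i.e. orthogonality with respect to $\rho$ supported on $\{q^{\mp k}\}_{k\in\mathbb{N}_0}$.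
   Context: Throughout $0<q<1$. For a function $y$ and $\zeta\in\{q,q^{-1}\}$, $D_\zeta y(x)=\frac{y(x)-y(\zeta x)}{(1-\zeta)x}$ for $x\ne0$ and $D_\zeta y(0)=y'(0)$; $[n]_q=\frac{1-q^n}{1-q}$. Let $\sigma_1$ be a real polynomial of degree at most two, $\tau(x)=\tau'(0)x+\tau(0)$ a real polynomial with $\tau'(0)\ne0$, and $\sigma_2(x):=q[\sigma_1(x)+(1-q^{-1})x\tau(x)]$. The q-EHT with parameter $n$ is $\sigma_1(x)D_{q^{-1}}D_qy(x)+\tau(x)D_qy(x)+\lambda_ny(x)=0$, $\lambda_n=-[n]_q\big(\tau'(0)+\tfrac12[n-1]_{q^{-1}}\sigma_1''(0)\big)$. For $q^\alpha=c$ ($c\ne0$), $\alpha$ is any complex number with $e^{\alpha\ln q}=c$ and $|x|^\alpha:=e^{\alpha\ln|x|}$; for $x>0$, $\sqrt{x^{\log_qx-1}}:=\exp\big(\tfrac12(\log_qx-1)\ln x\big)$. The improper $q$-Jackson integral is $\int_0^\infty f(x)\,d_qx=(1-q)\sum_{j=-\infty}^{\infty}q^jf(q^j)$. *)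

theory Defs
  imports "HOL-Analysis.Analysis" "HOL-Computational_Algebra.Polynomial"
begin

definition qD :: "real \<Rightarrow> (real \<Rightarrow> real) \<Rightarrow> real \<Rightarrow> real" where
  "qD \<zeta> y x = (if x = 0 then deriv y 0 else (y x - y (\<zeta> * x)) / ((1 - \<zeta>) * x))"

definition qnum :: "real \<Rightarrow> int \<Rightarrow> real" where
  "qnum q n = (1 - q powi n) / (1 - q)"

definition sigma2 :: "real \<Rightarrow> real poly \<Rightarrow> real poly \<Rightarrow> real poly" where
  "sigma2 q \<sigma>1 \<tau> = smult q (\<sigma>1 + smult (1 - 1/q) ([:0, 1:] * \<tau>))"

text \<open>lambda_n = -[n]_q (tau'(0) + (1/2)[n-1]_{q^{-1}} sigma_1''(0)); note (1/2)sigma_1''(0) = coeff sigma_1 2.\<close>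
definition qlambda :: "real \<Rightarrow> real poly \<Rightarrow> real poly \<Rightarrow> nat \<Rightarrow> real" where
  "qlambda q \<sigma>1 \<tau> n =
     - qnum q (int n) * (coeff \<tau> 1 + qnum (1/q) (int n - 1) * coeff \<sigma>1 2)"

definition qEHT_solution :: "real \<Rightarrow> real poly \<Rightarrow> real poly \<Rightarrow> real \<Rightarrow> (real \<Rightarrow> real) \<Rightarrow> bool" where
  "qEHT_solution q \<sigma>1 \<tau> lam y \<longleftrightarrow>
     (\<forall>x. poly \<sigma>1 x * qD (1/q) (qD q y) x + poly \<tau> x * qD q y x + lam * y x = 0)"

text \<open>Improper q-Jackson integral: (1-q) sum_{j in Z} q^j f(q^j) = I, the bilateral
  series converging (unconditionally) to I.\<close>
definition jackson_has_integral :: "real \<Rightarrow> (real \<Rightarrow> complex) \<Rightarrow> complex \<Rightarrow> bool" where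
  "jackson_has_integral q f I \<longleftrightarrow>
     ((\<lambda>j::int. complex_of_real ((1 - q) * q powi j) * f (q powi j)) has_sum I) UNIV"

end

theory Submission
  imports Defs
begin

text \<open>For \<open>\<sigma>1(x) = \<sigma>1'(0) x\<close> the q-EHT operator sends \<open>x^k\<close> to \<open>\<tau>'(0) [k]_q x^k\<close> plus a
  multiple of \<open>x^(k-1)\<close>. Its diagonal entries \<open>\<tau>'(0) [k]_q = -\<lambda>_k\<close> are pairwise distinct, so every
  \<open>\<lambda>_n\<close> has a monic polynomial eigenfunction \<open>P_n\<close> of degree \<open>n\<close>.

  On the lattice \<open>x = q^j\<close> the equation is a three-term relation between \<open>y(x/q)\<close>, \<open>y(x)\<close>
  and \<open>y(qx)\<close>, and \<open>\<rho>(q^j) = C^j q^(j(j-1)/2)\<close>, where \<open>C = q^\<alpha>\<close> is positive because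
  \<open>\<Lambda>_q < 0\<close>. The Pearson relation \<open>\<rho>(q^j) = C q^(j-1) \<rho>(q^(j-1))\<close> together with
  \<open>C \<tau>(0) q = -\<tau>'(0)\<close> turns \<open>\<lambda>_m - \<lambda>_n\<close> times the Jackson summand of \<open>P_n P_m \<rho>\<close> into a
  difference \<open>W_j - W_(j-1)\<close>. The Gaussian factor makes \<open>W\<close> summable over \<open>\<int>\<close>, so the sum
  vanishes for \<open>m \<noteq> n\<close>; for \<open>m = n\<close> it is a sum of nonnegative terms, not all zero.\<close>

section \<open>Polynomial solutions\<close>

definition qint :: "real \<Rightarrow> nat \<Rightarrow> real" where
  "qint z n = (\<Sum>i<n. z ^ i)"

lemma qint_closed_form: "(1 - z) * qint z n = 1 - z ^ n"
  by (cases "z = 1") (simp_all add: qint_def sum_gp_strict)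

lemma qnum_eq_qint: "q \<noteq> 1 \<Longrightarrow> qnum q (int n) = qint q n"
  using qint_closed_form[of q n] by (simp add: qnum_def field_simps)

lemma qint_strict_mono: "0 < z \<Longrightarrow> strict_mono (qint z)"
  by (rule strict_monoI_Suc) (simp add: qint_def)

definition qderiv :: "real \<Rightarrow> real poly \<Rightarrow> real poly" where
  "qderiv z p = (\<Sum>k<degree p. monom (qint z (Suc k) * coeff p (Suc k)) k)"

lemma coeff_qderiv: "coeff (qderiv z p) k = qint z (Suc k) * coeff p (Suc k)"
  unfolding qderiv_def coeff_sum coeff_monom
  by (cases "k < degree p") (auto simp: coeff_eq_0)

lemma poly_qderiv:
  assumes "x \<noteq> 0" "z \<noteq> 1"
  shows "poly (qderiv z p) x = (poly p x - poly p (z * x)) / ((1 - z) * x)"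
proof -
  have "(1 - z) * x * poly (qderiv z p) x
      = (\<Sum>k<degree p. coeff p (Suc k) * (1 - z ^ Suc k) * x ^ Suc k)"
    unfolding qderiv_def poly_sum poly_monom sum_distrib_left
  proof (rule sum.cong)
    fix k
    have "(1 - z) * x * (qint z (Suc k) * coeff p (Suc k) * x ^ k)
        = coeff p (Suc k) * ((1 - z) * qint z (Suc k)) * x ^ Suc k"
      by (simp add: algebra_simps)
    then show "(1 - z) * x * (qint z (Suc k) * coeff p (Suc k) * x ^ k)
        = coeff p (Suc k) * (1 - z ^ Suc k) * x ^ Suc k"
      by (simp only: qint_closed_form)
  qed simp
  also have "\<dots> = (\<Sum>i<Suc (degree p). coeff p i * (1 - z ^ i) * x ^ i)"
    by (subst sum.lessThan_Suc_shift) simp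
  also have "\<dots> = poly p x - poly p (z * x)"
    by (simp add: poly_altdef lessThan_Suc_atMost sum_subtractf[symmetric] power_mult_distrib
        algebra_simps)
  finally show ?thesis
    using assms by (simp add: field_simps)
qed

lemma qD_poly: "z \<noteq> 1 \<Longrightarrow> qD z (poly p) = poly (qderiv z p)"
proof
  fix x assume "z \<noteq> 1"
  have "deriv (poly p) 0 = poly (pderiv p) 0"
    by (rule DERIV_imp_deriv[OF poly_DERIV])
  then show "qD z (poly p) x = poly (qderiv z p) x"
    using \<open>z \<noteq> 1\<close>
    by (simp add: qD_def poly_qderiv poly_0_coeff_0 coeff_pderiv coeff_qderiv qint_def)
qed

definition qEHT_op :: "real \<Rightarrow> real poly \<Rightarrow> real poly \<Rightarrow> real poly \<Rightarrow> real poly" where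
  "qEHT_op q \<sigma>1 \<tau> p = \<sigma>1 * qderiv (1/q) (qderiv q p) + \<tau> * qderiv q p"

lemma qEHT_solution_poly_iff:
  assumes "0 < q" "q \<noteq> 1"
  shows "qEHT_solution q \<sigma>1 \<tau> lam (poly p) \<longleftrightarrow> qEHT_op q \<sigma>1 \<tau> p = smult (- lam) p"
proof -
  have D: "qD q (poly r) = poly (qderiv q r)" "qD (1/q) (poly r) = poly (qderiv (1/q) r)" for r
    using assms by (simp_all add: qD_poly field_simps)
  show ?thesis
    unfolding qEHT_solution_def qEHT_op_def D
    by (simp add: fun_eq_iff eq_neg_iff_add_eq_0 flip: poly_eq_poly_eq_iff)
qed

lemma coeff_qEHT_op_linear:
  "coeff (qEHT_op q [:0, s1:] [:\<tau>0, \<tau>1:] p) k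
     = (s1 * qint (1/q) k + \<tau>0) * qint q (Suc k) * coeff p (Suc k) + \<tau>1 * qint q k * coeff p k"
  by (cases k) (simp_all add: qEHT_op_def coeff_qderiv qint_def algebra_simps)

lemma qlambda_linear:
  "q \<noteq> 1 \<Longrightarrow> qlambda q [:0, s1:] [:\<tau>0, \<tau>1:] n = - \<tau>1 * qint q n"
  by (simp add: qlambda_def qnum_eq_qint numeral_2_eq_2)

lemma inj_qlambda_linear:
  assumes "0 < q" "q \<noteq> 1" "\<tau>1 \<noteq> 0"
  shows "inj (qlambda q [:0, s1:] [:\<tau>0, \<tau>1:])"
proof -
  have "inj (qint q)"
    by (rule strict_mono_imp_inj_on[OF qint_strict_mono[OF assms(1)]])
  then show ?thesis
    using assms(2,3) by (simp add: qlambda_linear inj_on_def)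
qed

lemma bidiagonal_eigenpoly_exists:
  fixes a b :: "nat \<Rightarrow> 'a::field"
  assumes b: "\<And>i. i < n \<Longrightarrow> b i \<noteq> b n"
  obtains p :: "'a poly" where "degree p = n" "lead_coeff p = 1"
    and "\<And>k. a k * coeff p (Suc k) + b k * coeff p k = b n * coeff p k"
proof
  define c where "c k = (if k \<le> n then \<Prod>i\<in>{k..<n}. a i / (b n - b i) else 0)" for k
  define p where "p = (\<Sum>k\<le>n. monom (c k) k)"
  have coeff_p: "coeff p k = c k" for k
    unfolding p_def coeff_sum coeff_monom by (auto simp: c_def)
  show "degree p = n"
  proof (rule antisym)
    show "degree p \<le> n"
      by (rule degree_le) (simp add: coeff_p c_def)
    show "n \<le> degree p"
      by (rule le_degree) (simp add: coeff_p c_def)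
  qed
  then show "lead_coeff p = 1"
    by (simp add: coeff_p c_def)
  fix k
  show "a k * coeff p (Suc k) + b k * coeff p k = b n * coeff p k"
  proof (cases "k < n")
    case True
    then have "c k = a k / (b n - b k) * c (Suc k)"
      by (simp add: c_def prod.atLeast_Suc_lessThan)
    moreover have "b n - b k \<noteq> 0"
      using b[OF True] by simp
    ultimately show ?thesis
      by (simp add: coeff_p field_simps)
  qed (auto simp: coeff_p c_def)
qed

lemma qEHT_polynomial_solutions:
  assumes q: "0 < q" "q \<noteq> 1" and "\<tau>1 \<noteq> 0"
  obtains P :: "nat \<Rightarrow> real poly" where "\<And>n. degree (P n) = n" "\<And>n. lead_coeff (P n) = 1"
    and "\<And>n. qEHT_solution q [:0, s1:] [:\<tau>0, \<tau>1:] (qlambda q [:0, s1:] [:\<tau>0, \<tau>1:] n) (poly (P n))"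
proof -
  have "\<exists>p. degree p = n \<and> lead_coeff p = 1 \<and>
          qEHT_solution q [:0, s1:] [:\<tau>0, \<tau>1:] (qlambda q [:0, s1:] [:\<tau>0, \<tau>1:] n) (poly p)" for n
  proof -
    have "\<tau>1 * qint q i \<noteq> \<tau>1 * qint q n" if "i < n" for i
      using strict_monoD[OF qint_strict_mono[OF q(1)] that] \<open>\<tau>1 \<noteq> 0\<close> by simp
    then obtain p where "degree p = n" "lead_coeff p = 1" and rec:
      "\<And>k. (s1 * qint (1/q) k + \<tau>0) * qint q (Suc k) * coeff p (Suc k) + \<tau>1 * qint q k * coeff p k
           = \<tau>1 * qint q n * coeff p k"
      using bidiagonal_eigenpoly_exists[where a = "\<lambda>k. (s1 * qint (1/q) k + \<tau>0) * qint q (Suc k)"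
            and b = "\<lambda>k. \<tau>1 * qint q k"] by blast
    moreover have "qEHT_op q [:0, s1:] [:\<tau>0, \<tau>1:] p = smult (\<tau>1 * qint q n) p"
      by (rule poly_eqI) (simp add: coeff_qEHT_op_linear rec)
    ultimately show ?thesis
      by (auto simp: qEHT_solution_poly_iff q qlambda_linear)
  qed
  then show ?thesis
    using that by metis
qed

section \<open>The equation on the lattice \<open>q^j\<close>\<close>

lemma qEHT_solution_lattice_equation:
  assumes q: "0 < q" "q \<noteq> 1" and x: "x \<noteq> 0" and s1: "(1 - 1/q) * \<tau>0 = - s1"
    and y: "qEHT_solution q [:0, s1:] [:\<tau>0, \<tau>1:] lam y"
  shows "- (1 - q) * lam * y x = \<tau>0 * q / x * (y (x/q) - y x) + \<tau>1 * (y x - y (q * x))"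
proof -
  have Dx: "qD q y x = (y x - y (q * x)) / ((1 - q) * x)"
    using x by (simp add: qD_def)
  have Dxq: "qD q y (x/q) = (y (x/q) - y x) / ((1 - q) * (x/q))"
    using q x by (simp add: qD_def)
  have "poly [:0, s1:] x * qD (1/q) (qD q y) x = s1 * (qD q y x - qD q y (x/q)) / (1 - 1/q)"
    using q x by (simp add: qD_def)
  also have "\<dots> = - \<tau>0 * (qD q y x - qD q y (x/q))"
  proof -
    have s1_eq: "s1 = - (1 - 1/q) * \<tau>0"
      using s1 by linarith
    show ?thesis
      unfolding s1_eq using q by (simp add: field_simps)
  qed
  finally have "poly [:0, s1:] x * qD (1/q) (qD q y) x + poly [:\<tau>0, \<tau>1:] x * qD q y x
      = \<tau>0 * qD q y (x/q) + \<tau>1 * x * qD q y x"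
    by (simp add: algebra_simps)
  moreover have "poly [:0, s1:] x * qD (1/q) (qD q y) x + poly [:\<tau>0, \<tau>1:] x * qD q y x = - lam * y x"
    using y unfolding qEHT_solution_def by (simp add: eq_neg_iff_add_eq_0)
  ultimately have "\<tau>0 * qD q y (x/q) + \<tau>1 * x * qD q y x = - lam * y x"
    by simp
  then have "- (1 - q) * lam * y x = (1 - q) * (\<tau>0 * qD q y (x/q) + \<tau>1 * x * qD q y x)"
    by (simp add: algebra_simps)
  also have "\<dots> = \<tau>0 * q / x * (y (x/q) - y x) + \<tau>1 * (y x - y (q * x))"
    unfolding Dx Dxq using q x by (simp add: divide_simps)
  finally show ?thesis .
qed

lemma lattice_Lagrange_identity:
  fixes f g :: "real \<Rightarrow> real"
  assumes x: "x \<noteq> 0" and q: "q \<noteq> 0" and C: "C * \<tau>0 * q = - \<tau>1"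
    and w: "w = C * (x/q) * w'"
    and f: "- (1 - q) * lf * f x = \<tau>0 * q / x * (f (x/q) - f x) + \<tau>1 * (f x - f (q * x))"
    and g: "- (1 - q) * lg * g x = \<tau>0 * q / x * (g (x/q) - g x) + \<tau>1 * (g x - g (q * x))"
  shows "(lg - lf) * ((1 - q) * x * (f x * g x) * w)
       = \<tau>1 * x * w * (f x * g (q * x) - g x * f (q * x))
         - \<tau>1 * (x/q) * w' * (f (x/q) * g x - g (x/q) * f x)"
proof -
  have "(lg - lf) * ((1 - q) * x * (f x * g x) * w)
      = x * w * ((- (1 - q) * lf * f x) * g x - f x * (- (1 - q) * lg * g x))"
    by (simp add: algebra_simps)
  also have "\<dots> = \<tau>0 * q * w * (f (x/q) * g x - g (x/q) * f x)
                  + \<tau>1 * x * w * (f x * g (q * x) - g x * f (q * x))"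
    unfolding f g using x by (simp add: field_simps)
  also have "\<tau>0 * q * w = - \<tau>1 * (x/q) * w'"
    unfolding w C[symmetric] using q by (simp add: field_simps)
  finally show ?thesis
    by (simp add: algebra_simps)
qed

section \<open>The weight\<close>

text \<open>\<open>C^j q^(j(j-1)/2)\<close>, the value of \<open>\<rho>\<close> at \<open>q^j\<close> when \<open>q^\<alpha> = C\<close>.\<close>
definition qweight :: "real \<Rightarrow> real \<Rightarrow> int \<Rightarrow> real" where
  "qweight q C j = C powi j * exp ((of_int j - 1) * (of_int j * ln q) / 2)"

lemma qweight_pos: "0 < C \<Longrightarrow> 0 < qweight q C j"
  by (simp add: qweight_def)

lemma exp_of_int_mult_ln: "0 < (q::real) \<Longrightarrow> exp (of_int j * ln q) = q powi j"
  using exp_power_int[of "ln q" j] by simp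

lemma qweight_succ:
  assumes "0 < q" "C \<noteq> 0"
  shows "qweight q C (j + 1) = C * q powi j * qweight q C j"
proof -
  have exponent: "(of_int (j + 1) - 1) * (of_int (j + 1) * ln q) / 2
      = of_int j * ln q + (of_int j - 1) * (of_int j * ln q) / 2"
    by (simp add: field_simps)
  have "exp ((of_int (j + 1) - 1) * (of_int (j + 1) * ln q) / 2)
      = q powi j * exp ((of_int j - 1) * (of_int j * ln q) / 2)"
    unfolding exponent exp_add exp_of_int_mult_ln[OF assms(1)] ..
  then show ?thesis
    using assms(2) by (simp add: qweight_def power_int_add_1')
qed

lemma qweight_mult_powi: "qweight q C j * q powi j = qweight q (C * q) j"
  by (simp add: qweight_def power_int_mult_distrib mult_ac)

lemma qweight_uminus:
  assumes "0 < q" "C \<noteq> 0"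
  shows "qweight q C (- j) = qweight q (q / C) j"
proof -
  have exponent: "(of_int (- j) - 1) * (of_int (- j) * ln q) / 2
      = of_int j * ln q + (of_int j - 1) * (of_int j * ln q) / 2"
    by (simp add: field_simps)
  show ?thesis
    unfolding qweight_def exponent exp_add exp_of_int_mult_ln[OF assms(1)]
    by (simp add: power_int_minus power_int_divide_distrib field_simps)
qed

lemma rho_on_lattice:
  fixes q C :: real and \<alpha> :: complex and \<rho> :: "real \<Rightarrow> complex"
  assumes q: "0 < q" "q < 1"
    and \<alpha>: "exp (\<alpha> * complex_of_real (ln q)) = complex_of_real C"
    and \<rho>: "\<And>x. \<rho> x = exp (\<alpha> * complex_of_real (ln \<bar>x\<bar>))
                  * complex_of_real (exp ((log q x - 1) * ln x / 2))"
  shows "\<rho> (q powi j) = complex_of_real (qweight q C j)"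
proof -
  have "q powi j = q powr of_int j"
    using q by (simp add: powr_real_of_int')
  then have ln: "ln (q powi j) = of_int j * ln q" and log: "log q (q powi j) = of_int j"
    using q by simp_all
  have "exp (\<alpha> * complex_of_real (ln (q powi j))) = exp (\<alpha> * complex_of_real (ln q)) powi j"
    unfolding ln exp_power_int by (simp add: mult_ac)
  then show ?thesis
    using q by (simp add: \<rho> \<alpha> ln log qweight_def)
qed

lemma summable_ratio_power_decay:
  fixes g :: "nat \<Rightarrow> real"
  assumes q: "0 < q" "q < 1" and rec: "\<And>n. g (Suc n) = r * q ^ n * g n"
    and nonneg: "\<And>n. 0 \<le> g n"
  shows "summable g"
proof -
  have "(\<lambda>n. r * q ^ n) \<longlonglongrightarrow> 0"
    using tendsto_mult_right_zero[OF LIMSEQ_power_zero[of q]] q by simp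
  then obtain N where N: "\<And>n. N \<le> n \<Longrightarrow> r * q ^ n < 1/2"
    using order_tendstoD(2)[of _ 0 sequentially "1/2::real"] by (auto simp: eventually_sequentially)
  show ?thesis
  proof (rule summable_ratio_test[of "1/2" N])
    fix n assume "N \<le> n"
    then have "r * q ^ n * g n \<le> 1/2 * g n"
      using N[of n] nonneg[of n] by (intro mult_right_mono) auto
    then show "norm (g (Suc n)) \<le> 1/2 * norm (g n)"
      using rec[of n] nonneg[of n] nonneg[of "Suc n"] by simp
  qed simp
qed

lemma summable_on_int_from_nat:
  fixes f :: "int \<Rightarrow> real"
  assumes "\<And>j. 0 \<le> f j"
    and "summable (\<lambda>n. f (int n))" "summable (\<lambda>n. f (- int n))"
  shows "f summable_on UNIV"
proof -
  have "f summable_on range int" "f summable_on range (\<lambda>n. - int n)"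
    using assms by (simp_all add: summable_on_reindex inj_on_def o_def summable_on_UNIV_nonneg_real_iff)
  then have "f summable_on (range int \<union> range (\<lambda>n. - int n))"
    by (rule summable_on_union)
  moreover have "j \<in> range int \<union> range (\<lambda>n. - int n)" for j :: int
    by (cases j rule: int_cases2) auto
  then have "range int \<union> range (\<lambda>n. - int n) = UNIV"
    by blast
  ultimately show ?thesis
    by simp
qed

lemma qweight_summable:
  assumes q: "0 < q" "q < 1" and "0 < C"
  shows "qweight q C summable_on UNIV"
proof (rule summable_on_int_from_nat)
  have summable_nat: "summable (\<lambda>n. qweight q D (int n))" if "0 < D" for D
  proof (rule summable_ratio_power_decay[OF q])
    show "qweight q D (int (Suc n)) = D * q ^ n * qweight q D (int n)" for n
      using qweight_succ[OF q(1), of D "int n"] that by (simp add: add.commute)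
    show "0 \<le> qweight q D (int n)" for n
      using qweight_pos[OF that] by (rule less_imp_le)
  qed
  show "summable (\<lambda>n. qweight q C (int n))"
    using summable_nat \<open>0 < C\<close> by simp
  show "summable (\<lambda>n. qweight q C (- int n))"
    using summable_nat[of "q / C"] q \<open>0 < C\<close> by (simp add: qweight_uminus)
qed (use \<open>0 < C\<close> in \<open>simp add: less_imp_le qweight_pos\<close>)

lemma qweight_poly_summable:
  assumes q: "0 < q" "q < 1" and "0 < C"
  shows "(\<lambda>j. qweight q C j * poly h (q powi j)) summable_on UNIV"
  using \<open>0 < C\<close>
proof (induction h arbitrary: C)
  case (pCons a h)
  have "(\<lambda>j. a * qweight q C j + qweight q (C * q) j * poly h (q powi j)) summable_on UNIV"
    using pCons q by (intro summable_on_add summable_on_cmult_right qweight_summable) simp_all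
  then show ?case
    by (simp add: algebra_simps flip: qweight_mult_powi)
qed simp

lemma has_sum_int_telescope:
  fixes W :: "int \<Rightarrow> 'a::real_normed_vector"
  assumes "(W has_sum V) UNIV"
  shows "((\<lambda>j. W j - W (j - 1)) has_sum 0) UNIV"
proof -
  have "((\<lambda>j. W (j - 1)) has_sum V) UNIV \<longleftrightarrow> (W has_sum V) UNIV"
    by (rule has_sum_reindex_bij_witness[where i = "\<lambda>j. j + 1" and j = "\<lambda>j. j - 1"]) auto
  with assms have "((\<lambda>j. W (j - 1)) has_sum V) UNIV"
    by simp
  then have "((\<lambda>j. W j + - W (j - 1)) has_sum (V + - V)) UNIV"
    using assms by (intro has_sum_add) (simp_all add: has_sum_uminus)
  then show ?thesis
    by simp
qed

section \<open>Jackson sums\<close>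

definition jackson_term :: "real \<Rightarrow> real \<Rightarrow> real poly \<Rightarrow> real poly \<Rightarrow> int \<Rightarrow> real" where
  "jackson_term q C f g j = (1 - q) * q powi j * (poly f (q powi j) * poly g (q powi j)) * qweight q C j"

lemma summable_jackson_term:
  assumes "0 < q" "q < 1" "0 < C"
  shows "jackson_term q C f g summable_on UNIV"
proof -
  have "(\<lambda>j. qweight q C j * poly (smult (1 - q) ([:0, 1:] * f * g)) (q powi j)) summable_on UNIV"
    using assms by (rule qweight_poly_summable)
  then show ?thesis
    by (simp add: jackson_term_def[abs_def] mult_ac)
qed

lemma jackson_term_orthogonal:
  assumes q: "0 < q" "q < 1" and s1: "(1 - 1/q) * \<tau>0 = - s1"
    and C: "0 < C" "C * \<tau>0 * q = - \<tau>1"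
    and f: "qEHT_solution q [:0, s1:] [:\<tau>0, \<tau>1:] lf (poly f)"
    and g: "qEHT_solution q [:0, s1:] [:\<tau>0, \<tau>1:] lg (poly g)"
    and "lf \<noteq> lg"
  shows "(jackson_term q C f g has_sum 0) UNIV"
proof -
  txt \<open>The boundary term of the summation by parts; by \<open>lattice_Lagrange_identity\<close> the
    summand, multiplied by \<open>lg - lf\<close>, is \<open>W j - W (j - 1)\<close>.\<close>
  define W where "W j = \<tau>1 * q powi j * qweight q C j
      * (poly f (q powi j) * poly g (q * q powi j) - poly g (q powi j) * poly f (q * q powi j))" for j
  have "(\<lambda>j. qweight q C j * poly (smult \<tau>1 ([:0, 1:] * (f * (g \<circ>\<^sub>p [:0, q:]) - g * (f \<circ>\<^sub>p [:0, q:]))))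
      (q powi j)) summable_on UNIV"
    using q C(1) by (rule qweight_poly_summable)
  then have "W summable_on UNIV"
    by (simp add: W_def[abs_def] poly_pcompose algebra_simps)
  then have telescope: "((\<lambda>j. W j - W (j - 1)) has_sum 0) UNIV"
    by (auto simp: summable_on_def intro: has_sum_int_telescope)
  have "(lg - lf) * jackson_term q C f g j = W j - W (j - 1)" for j
  proof -
    define x where "x = q powi j"
    have "x \<noteq> 0" "q powi (j - 1) = x / q" "q * (x / q) = x"
      using q by (simp_all add: x_def power_int_diff)
    moreover have "qweight q C j = C * (x / q) * qweight q C (j - 1)"
      using qweight_succ[OF q(1), of C "j - 1"] C(1) \<open>q powi (j - 1) = x / q\<close> by simp
    ultimately show ?thesis
      using lattice_Lagrange_identity[of x q C \<tau>0 \<tau>1 "qweight q C j" "qweight q C (j - 1)" lf "poly f" lg "poly g"]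
        qEHT_solution_lattice_equation[OF q(1) _ _ s1 f] qEHT_solution_lattice_equation[OF q(1) _ _ s1 g] q C
      by (simp add: W_def jackson_term_def x_def[symmetric])
  qed
  with telescope have "((\<lambda>j. (lg - lf) * jackson_term q C f g j) has_sum (lg - lf) * 0) UNIV"
    by simp
  with \<open>lf \<noteq> lg\<close> show ?thesis
    by (simp add: has_sum_cmult_right_iff)
qed

lemma poly_nonzero_at_some_power:
  fixes p :: "real poly"
  assumes "p \<noteq> 0" "0 < q" "q < 1"
  obtains k :: nat where "poly p (q ^ k) \<noteq> 0"
proof -
  have "inj (\<lambda>k::nat. q ^ k)"
    using assms(2,3) by (auto intro!: injI simp: power_inject_exp')
  then have "infinite (range (\<lambda>k::nat. q ^ k))"
    using finite_imageD by blast
  then have "\<not> range (\<lambda>k::nat. q ^ k) \<subseteq> {x. poly p x = 0}"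
    using poly_roots_finite[OF assms(1)] finite_subset by blast
  then show ?thesis
    using that by blast
qed

lemma jackson_term_self_pos:
  assumes "p \<noteq> 0" "0 < q" "q < 1" "0 < C"
  shows "0 < infsum (jackson_term q C p p) UNIV"
proof -
  obtain k :: nat where "poly p (q ^ k) \<noteq> 0"
    using assms(1-3) by (rule poly_nonzero_at_some_power)
  then have "0 < poly p (q ^ k) * poly p (q ^ k)"
    by (auto simp: zero_less_mult_iff linorder_neq_iff)
  then have "0 < jackson_term q C p p (int k)"
    using assms(2-4) qweight_pos[of C q "int k"] by (simp add: jackson_term_def mult_pos_pos)
  moreover have "0 \<le> jackson_term q C p p j" for j
    using assms(2-4) qweight_pos[of C q j] by (simp add: jackson_term_def)
  ultimately show ?thesis
    using has_sum_strict_mono[OF has_sum_0 has_sum_infsum[OF summable_jackson_term[OF assms(2-4)]]]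
    by auto
qed

lemma jackson_has_integral_jackson_term:
  fixes \<rho> :: "real \<Rightarrow> complex"
  assumes "\<And>j. \<rho> (q powi j) = of_real (qweight q C j)"
    and "(jackson_term q C f g has_sum I) UNIV"
  shows "jackson_has_integral q (\<lambda>x. of_real (poly f x * poly g x) * \<rho> x) (of_real I)"
  using has_sum_of_real[OF assms(2)]
  by (simp add: jackson_has_integral_def jackson_term_def[abs_def] assms(1) mult_ac
      del: of_real_power_int)

lemma jackson_term_has_sum_eigenpolys:
  assumes q: "0 < q" "q < 1" and s1: "(1 - 1/q) * \<tau>0 = - s1" and "\<tau>1 \<noteq> 0"
    and C: "0 < C" "C * \<tau>0 * q = - \<tau>1"
    and P: "\<And>n. qEHT_solution q [:0, s1:] [:\<tau>0, \<tau>1:] (qlambda q [:0, s1:] [:\<tau>0, \<tau>1:] n) (poly (P n))"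
  shows "(jackson_term q C (P n) (P m) has_sum
           (if m = n then infsum (jackson_term q C (P n) (P n)) UNIV else 0)) UNIV"
proof (cases "m = n")
  case True
  then show ?thesis
    using has_sum_infsum[OF summable_jackson_term[OF q C(1)]] by simp
next
  case False
  then have "qlambda q [:0, s1:] [:\<tau>0, \<tau>1:] n \<noteq> qlambda q [:0, s1:] [:\<tau>0, \<tau>1:] m"
    using inj_qlambda_linear[of q \<tau>1] q \<open>\<tau>1 \<noteq> 0\<close> by (auto dest: injD)
  with False show ?thesis
    using jackson_term_orthogonal[OF q s1 C P P] by simp
qed

lemma lattice_weight_constant:
  assumes q: "0 < q" "q < 1" and "s1 \<noteq> 0" and s1: "(1 - 1/q) * \<tau>0 = - s1" and "\<tau>1 / s1 < 0"
  defines "C \<equiv> q powi (-2) * coeff (sigma2 q [:0, s1:] [:\<tau>0, \<tau>1:]) 2 / s1"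
  shows "0 < C" "C * \<tau>0 * q = - \<tau>1"
proof -
  have C_eq: "C = (q - 1) / q\<^sup>2 * (\<tau>1 / s1)"
    using q \<open>s1 \<noteq> 0\<close> by (simp add: C_def sigma2_def numeral_2_eq_2 power_int_minus field_simps)
  show "0 < C"
    unfolding C_eq using q \<open>\<tau>1 / s1 < 0\<close> by (intro mult_neg_neg) (simp_all add: divide_neg_pos)
  have \<tau>0_eq: "\<tau>0 * (q - 1) = - s1 * q"
    using s1 q by (simp add: field_simps)
  have "C * \<tau>0 * q = \<tau>1 * (\<tau>0 * (q - 1)) / (q * s1)"
    using q \<open>s1 \<noteq> 0\<close> unfolding C_eq by (simp add: field_simps power2_eq_square)
  also have "\<dots> = - \<tau>1"
    using q \<open>s1 \<noteq> 0\<close> unfolding \<tau>0_eq by simp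
  finally show "C * \<tau>0 * q = - \<tau>1" .
qed

theorem theorem5p17:
  fixes q s1 \<tau>0 \<tau>1 :: real and \<sigma>1 \<tau> :: "real poly" and \<alpha> :: complex
    and \<rho> :: "real \<Rightarrow> complex"
  assumes q: "0 < q" "q < 1"
    and \<sigma>1: "\<sigma>1 = [:0, s1:]" "s1 \<noteq> 0"
    and \<tau>: "\<tau> = [:\<tau>0, \<tau>1:]" "\<tau>1 \<noteq> 0"
    and cond: "(1 - 1/q) * \<tau>0 = - s1"
    and Lam: "\<tau>1 / s1 < 0"
    and \<alpha>: "exp (\<alpha> * complex_of_real (ln q))
              = complex_of_real (q powi (-2) * coeff (sigma2 q \<sigma>1 \<tau>) 2 / s1)"
    and \<rho>: "\<And>x. \<rho> x = exp (\<alpha> * complex_of_real (ln \<bar>x\<bar>))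
                  * complex_of_real (exp ((log q x - 1) * ln x / 2))"
  shows "\<exists>P :: nat \<Rightarrow> real poly. \<exists>d :: nat \<Rightarrow> complex.
           (\<forall>n. degree (P n) = n \<and> qEHT_solution q \<sigma>1 \<tau> (qlambda q \<sigma>1 \<tau> n) (poly (P n))
                \<and> d n \<noteq> 0) \<and>
           (\<forall>m n. jackson_has_integral q
                     (\<lambda>x. complex_of_real (poly (P n) x * poly (P m) x) * \<rho> x)
                     (if m = n then d n else 0))"
proof -
  define C where "C = q powi (-2) * coeff (sigma2 q \<sigma>1 \<tau>) 2 / s1"
  have C: "0 < C" "C * \<tau>0 * q = - \<tau>1"
    using lattice_weight_constant[OF q \<sigma>1(2) cond Lam] unfolding C_def \<sigma>1(1) \<tau>(1) by auto
  obtain P where deg: "\<And>n. degree (P n) = n" and monic: "\<And>n. lead_coeff (P n) = 1"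
    and sol: "\<And>n. qEHT_solution q [:0, s1:] [:\<tau>0, \<tau>1:] (qlambda q [:0, s1:] [:\<tau>0, \<tau>1:] n) (poly (P n))"
    using qEHT_polynomial_solutions[of q \<tau>1] q \<tau>(2) by auto
  have \<rho>_lattice: "\<rho> (q powi j) = of_real (qweight q C j)" for j
    using rho_on_lattice[OF q _ \<rho>] \<alpha> by (simp add: C_def)
  define d where "d n = complex_of_real (infsum (jackson_term q C (P n) (P n)) UNIV)" for n
  have "P n \<noteq> 0" for n
    using monic[of n] by auto
  then have "d n \<noteq> 0" for n
    using jackson_term_self_pos[OF _ q C(1), of "P n"] by (simp add: d_def)
  moreover have "jackson_has_integral q (\<lambda>x. of_real (poly (P n) x * poly (P m) x) * \<rho> x)
      (if m = n then d n else 0)" for m n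
    using jackson_has_integral_jackson_term[OF \<rho>_lattice
        jackson_term_has_sum_eigenpolys[OF q cond \<tau>(2) C sol, of n m]]
    by (cases "m = n") (simp_all add: d_def)
  ultimately show ?thesis
    using deg sol unfolding \<sigma>1(1) \<tau>(1) by blast
qed

end
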